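(* Let $f:\mathbb{N}_0^n\to[0,\infty)$ be subadditive and suppose there is a constant $D_0$ with $f(\boldsymbol k)-f(\boldsymbol k+\boldsymbol e_i)\le D_0$ for all $\boldsymbol k\in\mathbb{N}_0^n$, $i=1,\dots,n$. Extend $f$ to $\mathbb{R}_0^n$ by $f(\boldsymbol r)=f(\lceil\boldsymbol r\rceil)$ and let $\hat f(\boldsymbol r)=\lim_{t\to\infty}f(t\boldsymbol r)/t$. Then $\hat f$ is subadditive and convex on $\mathbb{R}_0^n$, and Lipschitz: $|\hat f(\boldsymbol r)-\hat f(\boldsymbol s)|\le D\sum_{i=1}^n|r_i-s_i|$ with $D=\max\{f(\boldsymbol e_1),\dots,f(\boldsymbol e_n),D_0\}$. Moreover, for every sequence $\boldsymbol r_t\in\mathbb{R}_0^n$ converging to a finite $\boldsymbol\lambda$, $\lim_{t\to\infty}f(t\boldsymbol r_t)/t=\hat f(\boldsymbol\lambda)$.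
   Context: $\boldsymbol e_i$ is the $i$-th unit vector. A function $f:\mathbb{N}_0^n\to[0,\infty)$ is subadditive if $f(\boldsymbol k+\boldsymbol m)\le f(\boldsymbol k)+f(\boldsymbol m)$. The limit $\hat f(\boldsymbol r)$ exists and is finite and positively homogeneous for any nonnegative subadditive $f$ (so it is well defined here). Ceilings are coordinatewise. *)

theory Defs
  imports "HOL-Analysis.Analysis"
begin

text \<open>Points of N_0^n are vectors nat^'n, with the dimension n = CARD('n).
  The unit vector e_i is axis i 1.\<close>

definition subadditive_nat :: "(nat^'n \<Rightarrow> real) \<Rightarrow> bool" where
  "subadditive_nat f \<longleftrightarrow> (\<forall>k m. f (k + m) \<le> f k + f m)"

definition nonneg_orthant :: "(real^'n) set" where
  "nonneg_orthant = {r. \<forall>i. 0 \<le> r $ i}"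

definition fext :: "(nat^'n \<Rightarrow> real) \<Rightarrow> real^'n \<Rightarrow> real" where
  "fext f r = f (\<chi> i. nat \<lceil>r $ i\<rceil>)"

definition fhat :: "(nat^'n \<Rightarrow> real) \<Rightarrow> real^'n \<Rightarrow> real" where
  "fhat f r = Lim at_top (\<lambda>t::real. fext f (t *\<^sub>R r) / t)"

end

theory Submission
  imports Defs
begin

(* Write N = CARD('n).  The whole argument rests on the single hypothesis that f changes
   by at most D along every unit step: |f (k + e_i) - f k| <= D.  From it, f is D-Lipschitz
   for the l1 distance on the lattice, and its ceiling extension fext f is D-Lipschitz on
   R^n up to the additive error D * N caused by rounding; for vectors whose coordinates
   have equal signs, fext f is subadditive up to the same error D * N.
   Consequently, along each ray, h t = fext f (t r) + D * N is a nonnegative subadditive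
   function of t >= 0 with at most linear growth, and a real-variable version of Fekete's
   lemma shows that fext f (t r) / t converges; so fhat f r is a genuine limit.  Passing to
   the limit in the approximate inequalities (the errors are O(1/t)) gives subadditivity,
   positive homogeneity, hence convexity, and the Lipschitz bound for fhat f, as well as
   the convergence along sequences r_t -> lambda.  The constant D of the theorem is shown
   to bound the unit steps: f (k + e_i) - f k <= f (e_i) by subadditivity, and
   f k - f (k + e_i) <= D0 by hypothesis. *)

lemma nat_dist_le_int_dist: "\<bar>real (nat a) - real (nat b)\<bar> \<le> \<bar>real_of_int a - real_of_int b\<bar>"
  by (cases "a \<ge> 0"; cases "b \<ge> 0") auto

lemma nat_ceiling_dist:
  fixes x y :: real
  shows "\<bar>real (nat \<lceil>x\<rceil>) - real (nat \<lceil>y\<rceil>)\<bar> \<le> \<bar>x - y\<bar> + 1"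
proof -
  have "of_int \<lceil>x\<rceil> - 1 < x" "x \<le> of_int \<lceil>x\<rceil>" "of_int \<lceil>y\<rceil> - 1 < y" "y \<le> of_int \<lceil>y\<rceil>"
    by (auto simp: ceiling_correct)
  then show ?thesis
    using nat_dist_le_int_dist[of "\<lceil>x\<rceil>" "\<lceil>y\<rceil>"] by linarith
qed

lemma nat_ceiling_add:
  fixes x y :: real
  assumes "(0 \<le> x \<and> 0 \<le> y) \<or> (x \<le> 0 \<and> y \<le> 0)"
  shows "\<bar>real (nat \<lceil>x + y\<rceil>) - (real (nat \<lceil>x\<rceil>) + real (nat \<lceil>y\<rceil>))\<bar> \<le> 1"
proof -
  have "\<lceil>x + y\<rceil> \<le> \<lceil>x\<rceil> + \<lceil>y\<rceil>" "\<lceil>x\<rceil> + \<lceil>y\<rceil> \<le> \<lceil>x + y\<rceil> + 1"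
    by (simp_all add: ceiling_add_le) linarith
  then show ?thesis
    using assms by (cases "0 \<le> x \<and> 0 \<le> y") (auto simp: abs_if)
qed

subsection \<open>Fekete's lemma for functions of a real variable\<close>

lemma subadditive_iterate:
  fixes h :: "real \<Rightarrow> real"
  assumes sub: "\<And>s t. s \<ge> 0 \<Longrightarrow> t \<ge> 0 \<Longrightarrow> h (s + t) \<le> h s + h t"
    and "s \<ge> 0" "r \<ge> 0"
  shows "h (real q * s + r) \<le> real q * h s + h r"
proof (induction q)
  case 0
  show ?case by simp
next
  case (Suc q)
  have "h (real (Suc q) * s + r) = h (s + (real q * s + r))" by (simp add: algebra_simps)
  also have "\<dots> \<le> h s + h (real q * s + r)" using assms by (intro sub) auto
  also have "\<dots> \<le> real (Suc q) * h s + h r" using Suc by (simp add: algebra_simps)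
  finally show ?case .
qed

text \<open>A nonnegative subadditive function on [0, \<infinity>) that grows at most linearly satisfies
  h t / t \<longrightarrow> inf (h t / t) as t \<longrightarrow> \<infinity>.  The growth bound controls h on the
  remainder interval [0, s] when t is written as q s + r.\<close>
lemma fekete_real:
  fixes h :: "real \<Rightarrow> real"
  assumes nonneg: "\<And>t. t \<ge> 0 \<Longrightarrow> h t \<ge> 0"
    and sub: "\<And>s t. s \<ge> 0 \<Longrightarrow> t \<ge> 0 \<Longrightarrow> h (s + t) \<le> h s + h t"
    and growth: "\<And>t. t \<ge> 0 \<Longrightarrow> h t \<le> A + B * t"
  shows "((\<lambda>t. h t / t) \<longlongrightarrow> Inf ((\<lambda>t. h t / t) ` {0<..})) at_top"
proof -
  define Q where "Q = (\<lambda>t. h t / t) ` {0<..}"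
  define L where "L = Inf Q"
  have Q_nonneg: "x \<ge> 0" if "x \<in> Q" for x
    using that nonneg unfolding Q_def by force
  have "Q \<noteq> {}" unfolding Q_def by auto
  have L_le: "L \<le> h t / t" if "t > 0" for t
    unfolding L_def Q_def using Q_nonneg that by (intro cInf_lower bdd_belowI[of _ 0]) (auto simp: Q_def)
  show ?thesis unfolding Q_def[symmetric] L_def[symmetric]
  proof (rule tendstoI)
    fix e :: real assume e: "e > 0"
    obtain s where s: "s > 0" "h s / s < L + e/2"
      using cInf_lessD[OF \<open>Q \<noteq> {}\<close>, of "L + e/2"] e unfolding L_def Q_def by auto
    define M where "M = A + \<bar>B\<bar> * s"
    have M: "h r \<le> M" if "0 \<le> r" "r \<le> s" for r
    proof -
      have "B * r \<le> \<bar>B\<bar> * s" using that by (metis abs_ge_self abs_mult abs_of_nonneg mult_mono' order_trans abs_ge_zero)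
      then show ?thesis using growth[of r] that unfolding M_def by linarith
    qed
    show "eventually (\<lambda>t. dist (h t / t) L < e) at_top"
      using eventually_ge_at_top[of "max s (2 * M / e + 1)"]
    proof eventually_elim
      case (elim t)
      then have t: "t \<ge> s" "M < e * t / 2" using e by (auto simp: field_simps)
      have "t > 0" using s t by linarith
      define q where "q = nat \<lfloor>t / s\<rfloor>"
      have q: "real q = of_int \<lfloor>t / s\<rfloor>" unfolding q_def using s \<open>t > 0\<close> by simp
      have "real q * s \<le> t" "t < real q * s + s"
        using s q floor_divide_lower[of s t] floor_divide_upper[of s t] by (simp_all add: algebra_simps)
      then have r: "0 \<le> t - real q * s" "t - real q * s \<le> s" by auto
      have "h t = h (real q * s + (t - real q * s))" by simp
      also have "\<dots> \<le> real q * h s + h (t - real q * s)"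
        using s r by (intro subadditive_iterate[OF sub]) auto
      also have "\<dots> \<le> (real q * s) * (h s / s) + M" using M[OF r] s by simp
      also have "\<dots> \<le> t * (h s / s) + M"
        using \<open>real q * s \<le> t\<close> nonneg[of s] s by (intro add_right_mono mult_right_mono) auto
      also have "\<dots> \<le> t * (L + e/2) + M" using s(2) \<open>t > 0\<close> by (intro add_right_mono mult_left_mono) auto
      also have "\<dots> < t * (L + e)" using t by (simp add: algebra_simps)
      finally have "h t / t < L + e" using \<open>t > 0\<close> by (simp add: divide_less_eq mult.commute)
      then show ?case using L_le[OF \<open>t > 0\<close>] by (simp add: dist_real_def)
    qed
  qed
qed


locale bounded_unit_steps =
  fixes f :: "nat^'n \<Rightarrow> real" and D :: real
  assumes unit_step: "\<And>k i. \<bar>f (k + axis i 1) - f k\<bar> \<le> D"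
begin

lemma D_nonneg: "0 \<le> D"
  using unit_step[of 0 undefined] by linarith

lemma axis_step: "\<bar>f (k + axis j c) - f k\<bar> \<le> D * real c"
proof (induction c)
  case 0
  then show ?case by (simp add: zero_vec_def[symmetric] axis_def vec_eq_iff)
next
  case (Suc c)
  have split: "k + axis j (Suc c) = (k + axis j c) + axis j 1"
    by (simp add: vec_eq_iff axis_def)
  have "\<bar>f (k + axis j (Suc c)) - f k\<bar>
      \<le> \<bar>f ((k + axis j c) + axis j 1) - f (k + axis j c)\<bar> + \<bar>f (k + axis j c) - f k\<bar>"
    unfolding split by linarith
  also have "\<dots> \<le> D + D * real c" using unit_step Suc by (intro add_mono)
  finally show ?case by (simp add: algebra_simps)
qed

lemma shift_on_coordinates:
  assumes "finite S"
  shows "\<bar>f (k + (\<chi> i. if i \<in> S then d$i else 0)) - f k\<bar> \<le> D * (\<Sum>i\<in>S. real (d$i))"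
  using assms
proof (induction S rule: finite_induct)
  case empty
  then show ?case by (simp add: zero_vec_def[symmetric])
next
  case (insert j S)
  define v where "v = (\<chi> i. if i \<in> S then d$i else 0)"
  have split: "k + (\<chi> i. if i \<in> insert j S then d$i else 0) = (k + v) + axis j (d$j)"
    using insert(2) by (auto simp: vec_eq_iff axis_def v_def)
  have "\<bar>f (k + (\<chi> i. if i \<in> insert j S then d$i else 0)) - f k\<bar>
      \<le> \<bar>f ((k + v) + axis j (d$j)) - f (k + v)\<bar> + \<bar>f (k + v) - f k\<bar>"
    unfolding split by linarith
  also have "\<dots> \<le> D * real (d$j) + D * (\<Sum>i\<in>S. real (d$i))"
    using axis_step insert(3) unfolding v_def by (intro add_mono)
  finally show ?case using insert(1,2) by (simp add: distrib_left)
qed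

lemma shift: "\<bar>f (k + d) - f k\<bar> \<le> D * (\<Sum>i\<in>UNIV. real (d$i))"
  using shift_on_coordinates[of UNIV k d] by simp

text \<open>f is D-Lipschitz for the l1 distance on the lattice: go from k and from m
  to the other one through their coordinatewise minimum.\<close>
lemma lattice_lipschitz: "\<bar>f k - f m\<bar> \<le> D * (\<Sum>i\<in>UNIV. \<bar>real (k$i) - real (m$i)\<bar>)"
proof -
  define p where "p = (\<chi> i. min (k$i) (m$i))"
  define d1 where "d1 = (\<chi> i. k$i - p$i)"
  define d2 where "d2 = (\<chi> i. m$i - p$i)"
  have km: "k = p + d1" "m = p + d2" by (auto simp: vec_eq_iff p_def d1_def d2_def)
  have l1: "real (d1$i) + real (d2$i) = \<bar>real (k$i) - real (m$i)\<bar>" for i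
    by (cases "k$i \<le> m$i") (simp_all add: p_def d1_def d2_def min_def of_nat_diff)
  have "\<bar>f k - f m\<bar> \<le> \<bar>f (p + d1) - f p\<bar> + \<bar>f (p + d2) - f p\<bar>" using km by simp
  also have "\<dots> \<le> D * (\<Sum>i\<in>UNIV. real (d1$i)) + D * (\<Sum>i\<in>UNIV. real (d2$i))"
    by (intro add_mono shift)
  also have "\<dots> = D * (\<Sum>i\<in>UNIV. \<bar>real (k$i) - real (m$i)\<bar>)"
    by (simp add: l1 distrib_left[symmetric] sum.distrib[symmetric])
  finally show ?thesis .
qed

lemma fext_lipschitz:
  "\<bar>fext f r - fext f s\<bar> \<le> D * ((\<Sum>i\<in>UNIV. \<bar>r$i - s$i\<bar>) + real CARD('n))"
proof -
  have "\<bar>fext f r - fext f s\<bar> \<le> D * (\<Sum>i\<in>UNIV. \<bar>real (nat \<lceil>r$i\<rceil>) - real (nat \<lceil>s$i\<rceil>)\<bar>)"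
    using lattice_lipschitz[of "\<chi> i. nat \<lceil>r$i\<rceil>" "\<chi> i. nat \<lceil>s$i\<rceil>"]
    unfolding fext_def by simp
  also have "\<dots> \<le> D * (\<Sum>i\<in>UNIV. \<bar>r$i - s$i\<bar> + 1)"
    by (intro mult_left_mono sum_mono D_nonneg nat_ceiling_dist)
  finally show ?thesis by (simp add: sum.distrib)
qed

lemma fext_scaled_lipschitz:
  assumes "t > 0"
  shows "\<bar>fext f (t *\<^sub>R r) / t - fext f (t *\<^sub>R s) / t\<bar>
    \<le> D * (\<Sum>i\<in>UNIV. \<bar>r$i - s$i\<bar>) + D * real CARD('n) / t"
proof -
  have "(\<Sum>i\<in>UNIV. \<bar>(t *\<^sub>R r)$i - (t *\<^sub>R s)$i\<bar>) = t * (\<Sum>i\<in>UNIV. \<bar>r$i - s$i\<bar>)"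
    using assms by (simp add: sum_distrib_left abs_mult right_diff_distrib[symmetric])
  then have "\<bar>fext f (t *\<^sub>R r) - fext f (t *\<^sub>R s)\<bar>
      \<le> D * (t * (\<Sum>i\<in>UNIV. \<bar>r$i - s$i\<bar>) + real CARD('n))"
    using fext_lipschitz[of "t *\<^sub>R r" "t *\<^sub>R s"] by simp
  then show ?thesis
    using assms by (simp add: diff_divide_distrib[symmetric] field_simps)
qed

end

lemma const_over_t_tendsto_0: "((\<lambda>t::real. c / t) \<longlongrightarrow> 0) at_top"
  by (rule tendsto_divide_0[OF tendsto_const filterlim_at_top_imp_at_infinity[OF filterlim_ident]])

lemma convex_nonneg_orthant: "convex nonneg_orthant"
  unfolding convex_def nonneg_orthant_def by simp

subsection \<open>The homogenization\<close>

locale subadditive_bounded_steps = bounded_unit_steps f D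
  for f :: "nat^'n \<Rightarrow> real" and D :: real +
  assumes nonneg: "\<And>k. 0 \<le> f k"
    and subadditive: "subadditive_nat f"
begin

lemma fext_almost_subadditive:
  assumes same_sign: "\<And>i. (0 \<le> a$i \<and> 0 \<le> b$i) \<or> (a$i \<le> 0 \<and> b$i \<le> 0)"
  shows "fext f (a + b) \<le> fext f a + fext f b + D * real CARD('n)"
proof -
  define k where "k = (\<chi> i. nat \<lceil>(a + b)$i\<rceil>)"
  define u where "u = (\<chi> i. nat \<lceil>a$i\<rceil>)"
  define w where "w = (\<chi> i. nat \<lceil>b$i\<rceil>)"
  have "f k - f (u + w) \<le> D * (\<Sum>i\<in>UNIV. \<bar>real (k$i) - real ((u + w)$i)\<bar>)"
    using lattice_lipschitz[of k "u + w"] by linarith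
  also have "\<dots> \<le> D * (\<Sum>i\<in>(UNIV::'n set). 1)"
    using nat_ceiling_add[OF same_sign]
    by (intro mult_left_mono sum_mono D_nonneg) (simp add: k_def u_def w_def)
  finally have "f k \<le> f (u + w) + D * real CARD('n)" by simp
  moreover have "f (u + w) \<le> f u + f w"
    using subadditive unfolding subadditive_nat_def by blast
  ultimately show ?thesis unfolding fext_def k_def u_def w_def by simp
qed

text \<open>fhat f r is a genuine limit: along the ray t r, the function fext f (t r) + D N is
  nonnegative, subadditive and of linear growth, so Fekete's lemma applies.\<close>
lemma fhat_tendsto: "((\<lambda>t. fext f (t *\<^sub>R r) / t) \<longlongrightarrow> fhat f r) at_top"
proof -
  define N where "N = real CARD('n)"
  define h where "h = (\<lambda>t. fext f (t *\<^sub>R r) + D * N)"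
  have "((\<lambda>t. h t / t) \<longlongrightarrow> Inf ((\<lambda>t. h t / t) ` {0<..})) at_top"
  proof (rule fekete_real)
    show "h t \<ge> 0" for t
      unfolding h_def fext_def N_def by (intro add_nonneg_nonneg mult_nonneg_nonneg nonneg D_nonneg) simp
  next
    fix s t :: real assume "s \<ge> 0" "t \<ge> 0"
    then have "(0 \<le> (s *\<^sub>R r)$i \<and> 0 \<le> (t *\<^sub>R r)$i) \<or> ((s *\<^sub>R r)$i \<le> 0 \<and> (t *\<^sub>R r)$i \<le> 0)" for i
      by (cases "0 \<le> r$i") (simp_all add: mult_nonneg_nonpos)
    then have "fext f (s *\<^sub>R r + t *\<^sub>R r) \<le> fext f (s *\<^sub>R r) + fext f (t *\<^sub>R r) + D * N"
      unfolding N_def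
      by (rule fext_almost_subadditive)
    then show "h (s + t) \<le> h s + h t"
      unfolding h_def N_def using D_nonneg by (simp add: scaleR_left_distrib)
  next
    fix t :: real assume "t \<ge> 0"
    then show "h t \<le> (fext f 0 + 2 * D * N) + (D * (\<Sum>i\<in>UNIV. \<bar>r$i\<bar>)) * t"
      using fext_lipschitz[of "t *\<^sub>R r" 0]
      unfolding h_def N_def by (simp add: algebra_simps abs_mult sum_distrib_left)
  qed
  then have "((\<lambda>t. h t / t - D * N / t) \<longlongrightarrow> Inf ((\<lambda>t. h t / t) ` {0<..}) - 0) at_top"
    by (intro tendsto_diff const_over_t_tendsto_0)
  moreover have "(\<lambda>t. h t / t - D * N / t) = (\<lambda>t. fext f (t *\<^sub>R r) / t)"
    unfolding h_def by (simp add: diff_divide_distrib[symmetric])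
  ultimately have lim: "((\<lambda>t. fext f (t *\<^sub>R r) / t) \<longlongrightarrow> Inf ((\<lambda>t. h t / t) ` {0<..})) at_top"
    by simp
  then have "fhat f r = Inf ((\<lambda>t. h t / t) ` {0<..})"
    unfolding fhat_def by (intro tendsto_Lim) auto
  with lim show ?thesis by simp
qed


text \<open>Positive homogeneity: rescaling r by c > 0 is a reparametrization of the ray.\<close>
lemma fhat_homogeneous:
  assumes "c > 0"
  shows "fhat f (c *\<^sub>R r) = c * fhat f r"
proof -
  have "filterlim (\<lambda>t::real. c * t) at_top at_top"
    using assms by (intro filterlim_tendsto_pos_mult_at_top[OF tendsto_const _ filterlim_ident])
  then have "((\<lambda>t. c * (fext f ((c * t) *\<^sub>R r) / (c * t))) \<longlongrightarrow> c * fhat f r) at_top"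
    by (intro tendsto_mult tendsto_const filterlim_compose[OF fhat_tendsto])
  moreover have "(\<lambda>t. c * (fext f ((c * t) *\<^sub>R r) / (c * t))) = (\<lambda>t. fext f (t *\<^sub>R (c *\<^sub>R r)) / t)"
    using assms by (auto simp: fun_eq_iff mult.commute)
  ultimately show ?thesis
    using fhat_tendsto[of "c *\<^sub>R r"] by (metis tendsto_unique trivial_limit_at_top_linorder)
qed

text \<open>Subadditivity on the orthant: the rounding error of fext_almost_subadditive
  becomes D N / t after rescaling and disappears in the limit.\<close>
lemma fhat_subadditive:
  assumes r: "r \<in> nonneg_orthant" and s: "s \<in> nonneg_orthant"
  shows "fhat f (r + s) \<le> fhat f r + fhat f s"
proof (rule tendsto_le[OF trivial_limit_at_top_linorder])
  define N where "N = real CARD('n)"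
  show "((\<lambda>t. fext f (t *\<^sub>R r) / t + fext f (t *\<^sub>R s) / t + D * N / t)
      \<longlongrightarrow> fhat f r + fhat f s) at_top"
    using tendsto_add[OF tendsto_add[OF fhat_tendsto fhat_tendsto] const_over_t_tendsto_0] by simp
  show "((\<lambda>t. fext f (t *\<^sub>R (r + s)) / t) \<longlongrightarrow> fhat f (r + s)) at_top"
    by (rule fhat_tendsto)
  show "eventually (\<lambda>t. fext f (t *\<^sub>R (r + s)) / t
      \<le> fext f (t *\<^sub>R r) / t + fext f (t *\<^sub>R s) / t + D * N / t) at_top"
    using eventually_gt_at_top[of 0]
  proof eventually_elim
    case (elim t)
    then have "fext f (t *\<^sub>R r + t *\<^sub>R s) \<le> fext f (t *\<^sub>R r) + fext f (t *\<^sub>R s) + D * N"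
      unfolding N_def using r s by (intro fext_almost_subadditive) (simp add: nonneg_orthant_def)
    then show ?case
      using elim by (simp add: scaleR_right_distrib divide_right_mono add_divide_distrib[symmetric])
  qed
qed

text \<open>Subadditivity and positive homogeneity together give convexity.\<close>
lemma fhat_convex: "convex_on nonneg_orthant (fhat f)"
proof (rule convex_onI[OF _ convex_nonneg_orthant])
  fix t :: real and x y :: "real^'n"
  assume t: "0 < t" "t < 1" and "x \<in> nonneg_orthant" "y \<in> nonneg_orthant"
  then have "fhat f ((1 - t) *\<^sub>R x + t *\<^sub>R y) \<le> fhat f ((1 - t) *\<^sub>R x) + fhat f (t *\<^sub>R y)"
    by (intro fhat_subadditive) (simp_all add: nonneg_orthant_def)
  also have "\<dots> = (1 - t) * fhat f x + t * fhat f y"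
    using t by (simp add: fhat_homogeneous)
  finally show "fhat f ((1 - t) *\<^sub>R x + t *\<^sub>R y) \<le> (1 - t) * fhat f x + t * fhat f y" .
qed

lemma fhat_lipschitz: "\<bar>fhat f r - fhat f s\<bar> \<le> D * (\<Sum>i\<in>UNIV. \<bar>r$i - s$i\<bar>)"
proof (rule tendsto_le[OF trivial_limit_at_top_linorder])
  show "((\<lambda>t. D * (\<Sum>i\<in>UNIV. \<bar>r$i - s$i\<bar>) + D * real CARD('n) / t)
      \<longlongrightarrow> D * (\<Sum>i\<in>UNIV. \<bar>r$i - s$i\<bar>)) at_top"
    using tendsto_add[OF tendsto_const const_over_t_tendsto_0] by simp
  show "((\<lambda>t. \<bar>fext f (t *\<^sub>R r) / t - fext f (t *\<^sub>R s) / t\<bar>) \<longlongrightarrow> \<bar>fhat f r - fhat f s\<bar>) at_top"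
    by (intro tendsto_rabs tendsto_diff fhat_tendsto)
  show "eventually (\<lambda>t. \<bar>fext f (t *\<^sub>R r) / t - fext f (t *\<^sub>R s) / t\<bar>
      \<le> D * (\<Sum>i\<in>UNIV. \<bar>r$i - s$i\<bar>) + D * real CARD('n) / t) at_top"
    using eventually_gt_at_top[of 0] by eventually_elim (rule fext_scaled_lipschitz)
qed

text \<open>Convergence along a sequence r_t \<longrightarrow> \<lambda>: compare with the ray through \<lambda>, from which
  fext f (t r_t) / t differs by at most D |r_t - \<lambda>|_1 + D N / t.\<close>
lemma fhat_sequence_tendsto:
  assumes "rs \<longlonglongrightarrow> lam"
  shows "(\<lambda>t. fext f (real t *\<^sub>R rs t) / real t) \<longlonglongrightarrow> fhat f lam"
proof -
  define err where "err = (\<lambda>t. D * (\<Sum>i\<in>UNIV. \<bar>rs t $ i - lam $ i\<bar>) + D * real CARD('n) / real t)"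
  have "(\<lambda>t. \<Sum>i\<in>UNIV. \<bar>rs t $ i - lam $ i\<bar>) \<longlonglongrightarrow> (\<Sum>i\<in>UNIV. \<bar>lam $ i - lam $ i\<bar>)"
    by (intro tendsto_intros assms)
  then have "err \<longlonglongrightarrow> D * (\<Sum>i\<in>UNIV. \<bar>lam $ i - lam $ i\<bar>) + 0"
    unfolding err_def by (intro tendsto_add tendsto_mult tendsto_const lim_const_over_n)
  then have "err \<longlonglongrightarrow> 0" by simp
  then have "(\<lambda>t. fext f (real t *\<^sub>R rs t) / real t - fext f (real t *\<^sub>R lam) / real t) \<longlonglongrightarrow> 0"
  proof (rule Lim_null_comparison[rotated])
    show "eventually (\<lambda>t. norm (fext f (real t *\<^sub>R rs t) / real t - fext f (real t *\<^sub>R lam) / real t)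
        \<le> err t) sequentially"
      using eventually_gt_at_top[of "0::nat"]
      by eventually_elim (simp add: err_def fext_scaled_lipschitz)
  qed
  moreover have "(\<lambda>t. fext f (real t *\<^sub>R lam) / real t) \<longlonglongrightarrow> fhat f lam"
    using filterlim_compose[OF fhat_tendsto filterlim_real_sequentially] by simp
  ultimately show ?thesis
    using tendsto_add by fastforce
qed

end

text \<open>The constant of the theorem bounds the unit steps: upward by subadditivity,
  f (k + e_i) \<le> f k + f e_i, and downward by the hypothesis on D0.\<close>
lemma unit_steps_bounded:
  fixes f :: "nat^'n \<Rightarrow> real"
  assumes "subadditive_nat f" and "\<And>k i. f k - f (k + axis i 1) \<le> D0"
  shows "\<bar>f (k + axis i 1) - f k\<bar> \<le> max (Max (range (\<lambda>i. f (axis i 1)))) D0"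
proof -
  have "f (k + axis i 1) \<le> f k + f (axis i 1)"
    using assms(1) unfolding subadditive_nat_def by blast
  moreover have "f (axis i 1) \<le> Max (range (\<lambda>i. f (axis i 1)))" by (rule Max_ge) auto
  ultimately show ?thesis using assms(2)[of k i] by linarith
qed

theorem mainTheorem11:
  fixes f :: "nat^'n \<Rightarrow> real" and D0 :: real
  assumes nonneg: "\<And>k. 0 \<le> f k"
    and subadd: "subadditive_nat f"
    and D0: "\<And>k i. f k - f (k + axis i 1) \<le> D0"
  defines "D \<equiv> max (Max (range (\<lambda>i. f (axis i 1)))) D0"
  shows "(\<forall>r\<in>nonneg_orthant. \<forall>s\<in>nonneg_orthant. fhat f (r + s) \<le> fhat f r + fhat f s)
    \<and> convex_on nonneg_orthant (fhat f)
    \<and> (\<forall>r\<in>nonneg_orthant. \<forall>s\<in>nonneg_orthant.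
           \<bar>fhat f r - fhat f s\<bar> \<le> D * (\<Sum>i\<in>UNIV. \<bar>r $ i - s $ i\<bar>))
    \<and> (\<forall>rs lam. (\<forall>t. rs t \<in> nonneg_orthant) \<longrightarrow> rs \<longlonglongrightarrow> lam \<longrightarrow>
           (\<lambda>t. fext f (real t *\<^sub>R rs t) / real t) \<longlonglongrightarrow> fhat f lam)"
proof -
  interpret subadditive_bounded_steps f D
    using nonneg subadd unit_steps_bounded[OF subadd D0]
    unfolding D_def by unfold_locales
  show ?thesis
    using fhat_subadditive fhat_convex fhat_lipschitz fhat_sequence_tendsto by blast
qed

end
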